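(* Let $G$ be a graph with girth at least $7$. If $G$ contains a path $s_1u_1vu_2s_2$ such that $s_1$ and $s_2$ are support vertices and, for each $i\in\{1,2\}$, $u_i$ is the only neighbor of $s_i$ having degree at least $2$, then $G\notin\mathcal U$.
   Context: All graphs are finite and simple. A set $P\subseteq V(G)$ is an open packing if no two distinct vertices of $P$ have a common neighbor; it is maximal if maximal under inclusion among open packings. $\rho^o(G)$ is the maximum size of an open packing and $\rho^o_L(G)$ the minimum size of a maximal open packing; $\mathcal U$ is the class of graphs with $\rho^o_L(G)=\rho^o(G)$. A leaf is a vertex of degree $1$; a support vertex is a vertex adjacent to at least one leaf. The girth is the length of a shortest cycle ($\infty$ if acyclic). *)

theory Defs
  imports Main
begin

definition graph :: "'a set \<Rightarrow> ('a \<Rightarrow> 'a \<Rightarrow> bool) \<Rightarrow> bool" where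
  "graph V E \<longleftrightarrow> finite V \<and> (\<forall>x y. E x y \<longrightarrow> x \<in> V \<and> y \<in> V)
     \<and> (\<forall>x y. E x y \<longrightarrow> E y x) \<and> (\<forall>x. \<not> E x x)"

definition nbhd :: "'a set \<Rightarrow> ('a \<Rightarrow> 'a \<Rightarrow> bool) \<Rightarrow> 'a \<Rightarrow> 'a set" where
  "nbhd V E v = {u \<in> V. E v u}"

definition degree :: "'a set \<Rightarrow> ('a \<Rightarrow> 'a \<Rightarrow> bool) \<Rightarrow> 'a \<Rightarrow> nat" where
  "degree V E v = card (nbhd V E v)"

definition leaf :: "'a set \<Rightarrow> ('a \<Rightarrow> 'a \<Rightarrow> bool) \<Rightarrow> 'a \<Rightarrow> bool" where
  "leaf V E v \<longleftrightarrow> v \<in> V \<and> degree V E v = 1"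

definition support_vertex :: "'a set \<Rightarrow> ('a \<Rightarrow> 'a \<Rightarrow> bool) \<Rightarrow> 'a \<Rightarrow> bool" where
  "support_vertex V E v \<longleftrightarrow> v \<in> V \<and> (\<exists>u. E v u \<and> leaf V E u)"

definition is_cycle :: "'a set \<Rightarrow> ('a \<Rightarrow> 'a \<Rightarrow> bool) \<Rightarrow> 'a list \<Rightarrow> bool" where
  "is_cycle V E cs \<longleftrightarrow> length cs \<ge> 3 \<and> distinct cs \<and> set cs \<subseteq> V
     \<and> (\<forall>i < length cs. E (cs ! i) (cs ! ((i + 1) mod length cs)))"

definition girth_at_least :: "'a set \<Rightarrow> ('a \<Rightarrow> 'a \<Rightarrow> bool) \<Rightarrow> nat \<Rightarrow> bool" where
  "girth_at_least V E k \<longleftrightarrow> (\<forall>cs. is_cycle V E cs \<longrightarrow> length cs \<ge> k)"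

definition open_packing :: "'a set \<Rightarrow> ('a \<Rightarrow> 'a \<Rightarrow> bool) \<Rightarrow> 'a set \<Rightarrow> bool" where
  "open_packing V E P \<longleftrightarrow> P \<subseteq> V \<and>
     (\<forall>x \<in> P. \<forall>y \<in> P. x \<noteq> y \<longrightarrow> \<not> (\<exists>w. E x w \<and> E y w))"

definition maximal_open_packing :: "'a set \<Rightarrow> ('a \<Rightarrow> 'a \<Rightarrow> bool) \<Rightarrow> 'a set \<Rightarrow> bool" where
  "maximal_open_packing V E P \<longleftrightarrow> open_packing V E P \<and>
     (\<forall>Q. open_packing V E Q \<and> P \<subseteq> Q \<longrightarrow> Q = P)"

definition rho_o :: "'a set \<Rightarrow> ('a \<Rightarrow> 'a \<Rightarrow> bool) \<Rightarrow> nat" where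
  "rho_o V E = Max (card ` {P. open_packing V E P})"

definition rho_oL :: "'a set \<Rightarrow> ('a \<Rightarrow> 'a \<Rightarrow> bool) \<Rightarrow> nat" where
  "rho_oL V E = Min (card ` {P. maximal_open_packing V E P})"

definition in_U :: "'a set \<Rightarrow> ('a \<Rightarrow> 'a \<Rightarrow> bool) \<Rightarrow> bool" where
  "in_U V E \<longleftrightarrow> rho_oL V E = rho_o V E"

end

theory Submission
  imports Defs
begin

text \<open>Extend \<open>{v}\<close> to a maximal open packing \<open>P\<close>. A common neighbour \<open>w\<close> of \<open>s\<^sub>i\<close> and
  another vertex has degree at least 2, so \<open>w = u\<^sub>i\<close>, which is also adjacent to \<open>v\<close>. Hence
  no vertex of \<open>P - {v}\<close> shares a neighbour with \<open>s\<^sub>1\<close> or \<open>s\<^sub>2\<close>, and \<open>s\<^sub>1, s\<^sub>2\<close> share none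
  since \<open>u\<^sub>1 \<noteq> u\<^sub>2\<close>. Exchanging \<open>v\<close> for \<open>s\<^sub>1, s\<^sub>2\<close> yields an open packing of size
  \<open>|P| + 1\<close>, so \<open>\<rho>\<^sup>o\<^sub>L < \<rho>\<^sup>o\<close>.\<close>

lemma graph_sym: "graph V E \<Longrightarrow> E a b \<Longrightarrow> E b a"
  unfolding graph_def by blast

lemma graph_edge_in_V: "graph V E \<Longrightarrow> E a b \<Longrightarrow> a \<in> V \<and> b \<in> V"
  unfolding graph_def by blast

lemma degree_ge_2:
  assumes "graph V E" and "E w a" "E w b" "a \<noteq> b"
  shows "degree V E w \<ge> 2"
proof -
  have "finite (nbhd V E w)" using assms(1) unfolding graph_def nbhd_def by auto
  moreover have "{a, b} \<subseteq> nbhd V E w" using assms unfolding graph_def nbhd_def by auto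
  ultimately have "card {a, b} \<le> card (nbhd V E w)" by (rule card_mono)
  then show ?thesis using assms(4) unfolding degree_def by simp
qed

lemma open_packing_no_common_neighbour:
  "open_packing V E P \<Longrightarrow> x \<in> P \<Longrightarrow> y \<in> P \<Longrightarrow> x \<noteq> y \<Longrightarrow> E x w \<Longrightarrow> E y w \<Longrightarrow> False"
  unfolding open_packing_def by blast

lemma open_packing_subset: "open_packing V E P \<Longrightarrow> Q \<subseteq> P \<Longrightarrow> open_packing V E Q"
  unfolding open_packing_def by blast

lemma open_packing_insert:
  assumes "open_packing V E P" and "s \<in> V"
    and "\<And>x w. x \<in> P \<Longrightarrow> E x w \<Longrightarrow> E s w \<Longrightarrow> x = s"
  shows "open_packing V E (insert s P)"
  using assms unfolding open_packing_def by blast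

lemma finite_open_packing: "graph V E \<Longrightarrow> open_packing V E P \<Longrightarrow> finite P"
  unfolding graph_def open_packing_def by (blast intro: finite_subset)

lemma finite_open_packings: "graph V E \<Longrightarrow> finite {P. open_packing V E P}"
  unfolding graph_def open_packing_def by (simp add: finite_subset)

lemma card_le_rho_o: "graph V E \<Longrightarrow> open_packing V E P \<Longrightarrow> card P \<le> rho_o V E"
  unfolding rho_o_def by (auto intro: Max_ge dest: finite_open_packings)

lemma rho_oL_le_card:
  assumes "graph V E" and "maximal_open_packing V E P"
  shows "rho_oL V E \<le> card P"
proof -
  have "finite {P. maximal_open_packing V E P}"
    using finite_open_packings[OF assms(1)]
    by (rule finite_subset[rotated]) (auto simp: maximal_open_packing_def)
  then show ?thesis unfolding rho_oL_def using assms(2) by (auto intro: Min_le)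
qed

lemma maximal_open_packing_extends:
  assumes "graph V E" and "open_packing V E Q"
  obtains P where "Q \<subseteq> P" and "maximal_open_packing V E P"
  using finite_has_maximal2[OF finite_open_packings[OF assms(1)], of Q] assms(2)
  unfolding maximal_open_packing_def by auto

lemma common_neighbour_is_unique_big_neighbour:
  assumes "graph V E" and "\<forall>w. E s w \<and> degree V E w \<ge> 2 \<longrightarrow> w = u"
    and "E x w" "E s w" "x \<noteq> s"
  shows "w = u"
  using assms degree_ge_2[of V E w x s] graph_sym[of V E] by blast

text \<open>The case \<open>x = s\<close> is included, so this also shows \<open>s \<notin> P - {v}\<close>.\<close>

lemma exchange_candidate_no_common_neighbour:
  assumes "graph V E" and "open_packing V E P" and "v \<in> P"
    and "E s u" "E u v" and "\<forall>w. E s w \<and> degree V E w \<ge> 2 \<longrightarrow> w = u"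
    and "x \<in> P" "x \<noteq> v" "E x w" "E s w"
  shows False
proof (cases "x = s")
  case True
  then show False
    using open_packing_no_common_neighbour[OF assms(2) assms(7,3,8)] assms(4,5)
      graph_sym[OF assms(1)] by blast
next
  case False
  then have "w = u"
    using common_neighbour_is_unique_big_neighbour[OF assms(1,6,9,10)] by blast
  then show False
    using open_packing_no_common_neighbour[OF assms(2) assms(7,3,8,9)] assms(5)
      graph_sym[OF assms(1)] by blast
qed

lemma open_packing_exchange:
  assumes g: "graph V E" and P: "open_packing V E P" and "v \<in> P"
    and "E s1 u1" "E u1 v" and big1: "\<forall>w. E s1 w \<and> degree V E w \<ge> 2 \<longrightarrow> w = u1"
    and "E s2 u2" "E u2 v" and big2: "\<forall>w. E s2 w \<and> degree V E w \<ge> 2 \<longrightarrow> w = u2"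
    and "u1 \<noteq> u2" "s1 \<noteq> s2"
  shows "open_packing V E (insert s1 (insert s2 (P - {v})))"
    and "card (insert s1 (insert s2 (P - {v}))) = card P + 1"
proof -
  have free1: "\<And>x w. x \<in> P - {v} \<Longrightarrow> E x w \<Longrightarrow> E s1 w \<Longrightarrow> False"
    using exchange_candidate_no_common_neighbour[OF g P \<open>v \<in> P\<close> assms(4,5) big1] by blast
  have free2: "\<And>x w. x \<in> P - {v} \<Longrightarrow> E x w \<Longrightarrow> E s2 w \<Longrightarrow> False"
    using exchange_candidate_no_common_neighbour[OF g P \<open>v \<in> P\<close> assms(7,8) big2] by blast
  have s12: False if "E s2 w" "E s1 w" for w
    using common_neighbour_is_unique_big_neighbour[OF g big1 that]
      common_neighbour_is_unique_big_neighbour[OF g big2 that(2,1)] assms(10,11) by auto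
  show "open_packing V E (insert s1 (insert s2 (P - {v})))"
  proof (intro open_packing_insert)
    show "open_packing V E (P - {v})" using open_packing_subset[OF P] by blast
    show "s1 \<in> V" "s2 \<in> V" using graph_edge_in_V[OF g] assms(4,7) by blast+
    show "x = s2" if "x \<in> P - {v}" "E x w" "E s2 w" for x w using free2 that by blast
    show "x = s1" if "x \<in> insert s2 (P - {v})" "E x w" "E s1 w" for x w
      using free1 s12 that by blast
  qed
  have "s1 \<notin> P - {v}" "s2 \<notin> P - {v}"
    using free1[OF _ assms(4,4)] free2[OF _ assms(7,7)] by blast+
  then show "card (insert s1 (insert s2 (P - {v}))) = card P + 1"
    using finite_open_packing[OF g P] \<open>v \<in> P\<close> assms(11) card_gt_0_iff[of P]
    by (auto simp: card_Diff_singleton)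
qed

theorem lemma4:
  fixes V :: "'a set" and E :: "'a \<Rightarrow> 'a \<Rightarrow> bool" and s1 u1 v u2 s2 :: 'a
  assumes "graph V E"
    and "girth_at_least V E 7"
    and "distinct [s1, u1, v, u2, s2]"
    and "E s1 u1" and "E u1 v" and "E v u2" and "E u2 s2"
    and "support_vertex V E s1" and "support_vertex V E s2"
    and "\<forall>w. E s1 w \<and> degree V E w \<ge> 2 \<longleftrightarrow> w = u1"
    and "\<forall>w. E s2 w \<and> degree V E w \<ge> 2 \<longleftrightarrow> w = u2"
  shows "\<not> in_U V E"
proof -
  note g = assms(1) and sym = graph_sym[OF assms(1)]
  have "open_packing V E {v}"
    using graph_edge_in_V[OF g assms(5)] unfolding open_packing_def by auto
  then obtain P where "v \<in> P" and max: "maximal_open_packing V E P"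
    using maximal_open_packing_extends[OF g] by blast
  then have "open_packing V E P" unfolding maximal_open_packing_def by blast
  note exchange = open_packing_exchange[OF g this \<open>v \<in> P\<close> assms(4,5) _
      sym[OF assms(7)] sym[OF assms(6)]]
  have "rho_oL V E \<le> card P" using rho_oL_le_card[OF g max] .
  also have "\<dots> < card (insert s1 (insert s2 (P - {v})))"
    using exchange(2) assms(3,10,11) by auto
  also have "\<dots> \<le> rho_o V E"
    using card_le_rho_o[OF g exchange(1)] assms(3,10,11) by auto
  finally show ?thesis unfolding in_U_def by simp
qed

end
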